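(* Let $\lambda\in\mathbb N$ be fixed and $p=\frac{\lambda+1}{\lambda}$. For every rational $\alpha\in(0,1]$, every profile $P$, every ranking $r$ that the $p$-geometric rule may output on $P$ (under any tie-breaking), and every group $N'$ that is $(\alpha,\lambda)$-significant in $P$, we have $\mathrm{avg}(N',r_{\le k})\ge\lambda$ where $k=\lceil\frac{e(\lambda+1)}{\alpha}\rceil$.
   Context: Let $N=[n]$ be a finite set of voters and $A$ a finite set of $m$ alternatives; a profile $P=(A_1,\dots,A_n)$ gives each voter $i$ a non-empty approval set $A_i\subseteq A$. A ranking $r=(r_1,\dots,r_m)$ is a linear order of $A$, $r_{\le k}=\{r_1,\dots,r_k\}$, with $r_{\le k}=A$ for $k\ge m$. For nonempty $N'\subseteq N$ and $S\subseteq A$, $\mathrm{avg}(N',S)=\frac1{|N'|}\sum_{i\in N'}|A_i\cap S|$. The cohesiveness of $N'$ is $\lambda(N')=|\bigcap_{i\in N'}A_i|$; $N'$ is $(\alpha,\lambda)$-significant in $P$ if $|N'|=\lceil\alpha n\rceil$ and $\lambda(N')\ge\lambda$. For a weight vector $\mathbf w=(w_1,w_2,\dots)$ of nonnegative reals and $S\subseteq A$, let $w(S)=\sum_{i\in N}\sum_{j=1}^{|A_i\cap S|}w_j$. The rule $\mathbf w$-RAV builds $r$ iteratively from the empty ranking: at step $k\in[m]$ it appends an unranked alternative $a$ maximizing $w(r_{\le k-1}\cup\{a\})-w(r_{\le k-1})$ (ties broken arbitrarily). The $p$-geometric rule ($p>1$) is $\mathbf w$-RAV with $\mathbf w=(\frac1p,\frac1{p^2},\frac1{p^3},\dots)$.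 $e$ is Euler's number. *)

theory Defs
  imports Complex_Main
begin

definition is_profile :: "nat \<Rightarrow> 'a set \<Rightarrow> (nat \<Rightarrow> 'a set) \<Rightarrow> bool" where
  "is_profile n Alts P \<longleftrightarrow> (\<forall>i<n. P i \<noteq> {} \<and> P i \<subseteq> Alts)"

text \<open>A ranking is a list enumerating all alternatives exactly once; r_{<=k} = set (take k r).\<close>
definition is_ranking :: "'a set \<Rightarrow> 'a list \<Rightarrow> bool" where
  "is_ranking Alts r \<longleftrightarrow> distinct r \<and> set r = Alts"

definition prefix_set :: "'a list \<Rightarrow> nat \<Rightarrow> 'a set" where
  "prefix_set r k = set (take k r)"

definition avg :: "(nat \<Rightarrow> 'a set) \<Rightarrow> nat set \<Rightarrow> 'a set \<Rightarrow> real" where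
  "avg P N' S = (\<Sum>i\<in>N'. real (card (P i \<inter> S))) / real (card N')"

definition cohesiveness :: "(nat \<Rightarrow> 'a set) \<Rightarrow> nat set \<Rightarrow> nat" where
  "cohesiveness P N' = card (\<Inter>i\<in>N'. P i)"

definition significant :: "nat \<Rightarrow> (nat \<Rightarrow> 'a set) \<Rightarrow> real \<Rightarrow> nat \<Rightarrow> nat set \<Rightarrow> bool" where
  "significant n P \<alpha> l N' \<longleftrightarrow>
     N' \<subseteq> {..<n} \<and> card N' = nat \<lceil>\<alpha> * real n\<rceil> \<and> cohesiveness P N' \<ge> l"

text \<open>Weight vector w = (w 1, w 2, ...), indexed from 1.\<close>
definition wscore :: "(nat \<Rightarrow> real) \<Rightarrow> nat \<Rightarrow> (nat \<Rightarrow> 'a set) \<Rightarrow> 'a set \<Rightarrow> real" where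
  "wscore w n P S = (\<Sum>i<n. \<Sum>j=1..card (P i \<inter> S). w j)"

text \<open>r is a possible output of w-RAV (for some tie-breaking): each step picks a
  maximizer of the marginal gain among unranked alternatives.\<close>
definition rav_output :: "(nat \<Rightarrow> real) \<Rightarrow> nat \<Rightarrow> 'a set \<Rightarrow> (nat \<Rightarrow> 'a set) \<Rightarrow> 'a list \<Rightarrow> bool" where
  "rav_output w n Alts P r \<longleftrightarrow> is_ranking Alts r \<and>
     (\<forall>k < length r. \<forall>b \<in> Alts - set (take k r).
        wscore w n P (set (take k r) \<union> {b}) - wscore w n P (set (take k r))
        \<le> wscore w n P (set (take k r) \<union> {r ! k}) - wscore w n P (set (take k r)))"

definition geometric_weights :: "real \<Rightarrow> nat \<Rightarrow> real" where
  "geometric_weights p j = 1 / p ^ j"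

end

theory Submission
  imports Defs
begin

(* Write q = 1/p = l/(l+1), so the weights are w_j = q^j, and y_i = |A_i \<inter> r_{<=k}|.
   If the average of the y_i over N' were below l, one of the at least l alternatives approved
   by all of N' would still be unranked at every step t < k; adding it gains at least
   \<Sum>_{i\<in>N'} q^(y_i+1), hence so does the greedy choice. By convexity of x \<mapsto> q^x this is at
   least |N'| q^(l+1), so the score of r_{<=k} is at least k |N'| q^(l+1) >= e (l+1) n q^(l+1) >= l n,
   using (1 + 1/l)^l <= e. But each voter contributes less than q/(1-q) = l to any score. *)

lemma power_ge_tangent:
  fixes q :: real
  assumes "0 < q"
  shows "q ^ m * (1 + (real k - real m) * ln q) \<le> q ^ k"
proof -
  have pow_exp: "\<And>j. q ^ j = exp (real j * ln q)"
    using assms by (simp add: exp_of_nat_mult)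
  have "q ^ m * (1 + (real k - real m) * ln q) \<le> q ^ m * exp ((real k - real m) * ln q)"
    using assms by (intro mult_left_mono exp_ge_add_one_self) auto
  also have "\<dots> = q ^ k"
    unfolding pow_exp by (simp add: exp_add[symmetric] algebra_simps)
  finally show ?thesis .
qed

lemma card_mult_power_le_sum_power:
  fixes q :: real and y :: "'b \<Rightarrow> nat"
  assumes "finite N" "0 < q" "q \<le> 1"
    and "(\<Sum>i\<in>N. real (y i)) \<le> real (card N) * real m"
  shows "real (card N) * q ^ m \<le> (\<Sum>i\<in>N. q ^ y i)"
proof -
  have "0 \<le> ln q * ((\<Sum>i\<in>N. real (y i)) - real (card N) * real m)"
    using assms by (intro mult_nonpos_nonpos) auto
  then have "real (card N) * q ^ m
      \<le> q ^ m * (real (card N) + ln q * ((\<Sum>i\<in>N. real (y i)) - real (card N) * real m))"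
    using assms(2) by (simp add: distrib_left)
  also have "\<dots> = (\<Sum>i\<in>N. q ^ m * (1 + (real (y i) - real m) * ln q))"
    by (simp add: sum.distrib sum_distrib_left sum_distrib_right sum_subtractf algebra_simps)
  also have "\<dots> \<le> (\<Sum>i\<in>N. q ^ y i)"
    using assms(2) by (intro sum_mono power_ge_tangent)
  finally show ?thesis .
qed

lemma one_plus_inverse_power_le_exp_1:
  assumes "n \<ge> 1"
  shows "((real n + 1) / real n) ^ n \<le> exp 1"
proof -
  have "(real n + 1) / real n = 1 + 1 / real n"
    using assms by (simp add: field_simps)
  moreover have "(1 + 1 / real n) ^ n \<le> exp 1"
    using assms by (intro exp_ge_one_plus_x_over_n_power_n) auto
  ultimately show ?thesis by simp
qed

lemma prefix_set_mono: "t \<le> k \<Longrightarrow> prefix_set r t \<subseteq> prefix_set r k"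
  unfolding prefix_set_def by (rule set_take_subset_set_take)

lemma prefix_set_Suc: "k < length r \<Longrightarrow> prefix_set r (Suc k) = prefix_set r k \<union> {r ! k}"
  unfolding prefix_set_def by (simp add: take_Suc_conv_app_nth)

lemma wscore_marginal_gain:
  assumes "\<forall>i<n. finite (P i)" "a \<notin> S"
  shows "wscore w n P (S \<union> {a}) - wscore w n P S
     = (\<Sum>i<n. if a \<in> P i then w (card (P i \<inter> S) + 1) else 0)"
  unfolding wscore_def sum_subtractf[symmetric]
proof (intro sum.cong refl)
  fix i assume "i \<in> {..<n}"
  then have "finite (P i \<inter> S)" using assms(1) by auto
  moreover have "P i \<inter> (S \<union> {a}) = (if a \<in> P i then insert a (P i \<inter> S) else P i \<inter> S)"
    by auto
  ultimately show "(\<Sum>j=1..card (P i \<inter> (S \<union> {a})). w j) - (\<Sum>j=1..card (P i \<inter> S). w j)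
      = (if a \<in> P i then w (card (P i \<inter> S) + 1) else 0)"
    using assms(2) by simp
qed

lemma wscore_prefix_telescope:
  assumes "k \<le> length r"
  shows "wscore w n P (prefix_set r k)
     = (\<Sum>t<k. wscore w n P (prefix_set r t \<union> {r ! t}) - wscore w n P (prefix_set r t))"
  using assms
proof (induction k)
  case 0
  then show ?case by (simp add: prefix_set_def wscore_def)
next
  case (Suc k)
  then show ?case by (simp add: prefix_set_Suc)
qed

lemma wscore_geometric_less:
  fixes p :: real
  assumes "1 < p" "n \<ge> 1"
  shows "wscore (geometric_weights p) n P S < real n / (p - 1)"
proof -
  have voter: "(\<Sum>j=1..c. geometric_weights p j) < 1 / (p - 1)" for c
  proof -
    have "1 + (\<Sum>j=1..c. geometric_weights p j) = (\<Sum>j\<in>{0..c}. (1 / p) ^ j)"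
      by (simp add: sum.atLeast_Suc_atMost geometric_weights_def power_one_over)
    also have "\<dots> < 1 / (1 - 1 / p)"
      using assms(1) by (intro geometric_sum_less) auto
    also have "\<dots> = 1 + 1 / (p - 1)"
      using assms(1) by (simp add: field_simps)
    finally show ?thesis by simp
  qed
  have "wscore (geometric_weights p) n P S < (\<Sum>i<n. 1 / (p - 1))"
    unfolding wscore_def using assms(2) by (intro sum_strict_mono voter) (auto simp: lessThan_empty_iff)
  then show ?thesis by simp
qed

lemma avg_ge_cohesiveness:
  assumes "finite N'" "N' \<noteq> {}" "\<forall>i\<in>N'. finite (P i)" "(\<Inter>i\<in>N'. P i) \<subseteq> S"
  shows "real (cohesiveness P N') \<le> avg P N' S"
proof -
  have "cohesiveness P N' \<le> card (P i \<inter> S)" if "i \<in> N'" for i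
    unfolding cohesiveness_def using that assms(3,4) by (intro card_mono) auto
  then have "real (card N') * real (cohesiveness P N') \<le> (\<Sum>i\<in>N'. real (card (P i \<inter> S)))"
    using sum_mono[of N' "\<lambda>_. real (cohesiveness P N')"] by simp
  then show ?thesis
    unfolding avg_def using assms(1,2) by (simp add: le_divide_eq mult.commute)
qed

lemma geometric_weights_nonneg: "0 \<le> p \<Longrightarrow> 0 \<le> geometric_weights p j"
  by (simp add: geometric_weights_def)

lemma antimono_geometric_weights: "1 \<le> p \<Longrightarrow> antimono (geometric_weights p)"
  by (intro antimonoI) (simp add: geometric_weights_def frac_le power_increasing)

lemma geometric_weights_threshold:
  assumes "l \<ge> 1"
  shows "real l \<le> exp 1 * (real l + 1) * geometric_weights ((real l + 1) / real l) (l + 1)"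
proof -
  define p where "p = (real l + 1) / real l"
  have p_pos: "0 < p" and p_l: "(real l + 1) / p = real l"
    using assms by (auto simp: p_def)
  have "real l = real l * 1" by simp
  also have "\<dots> \<le> real l * (exp 1 / p ^ l)"
    using one_plus_inverse_power_le_exp_1[OF assms] p_pos
    by (intro mult_left_mono) (auto simp: p_def)
  also have "\<dots> = exp 1 * ((real l + 1) / p) / p ^ l"
    by (simp add: p_l)
  also have "\<dots> = exp 1 * (real l + 1) * geometric_weights p (l + 1)"
    by (simp add: geometric_weights_def)
  finally show ?thesis unfolding p_def .
qed

lemma rav_output_prefix_score_ge:
  assumes rav: "rav_output w n Alts P r"
    and w_nonneg: "\<And>j. 0 \<le> w j" and w_antimono: "antimono w"
    and fin: "\<forall>i<n. finite (P i)" and N'_sub: "N' \<subseteq> {..<n}"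
    and C_Alts: "C \<subseteq> Alts" and C_common: "\<forall>i\<in>N'. C \<subseteq> P i"
    and C_unranked: "\<not> C \<subseteq> prefix_set r k"
  shows "real k * (\<Sum>i\<in>N'. w (card (P i \<inter> prefix_set r k) + 1))
    \<le> wscore w n P (prefix_set r k)"
proof -
  define S where "S = prefix_set r"
  define gain where "gain t = wscore w n P (S t \<union> {r ! t}) - wscore w n P (S t)" for t
  define G where "G = (\<Sum>i\<in>N'. w (card (P i \<inter> S k) + 1))"
  have k_len: "k < length r"
  proof (rule ccontr)
    assume "\<not> k < length r"
    then have "prefix_set r k = Alts"
      using rav by (simp add: rav_output_def is_ranking_def prefix_set_def)
    then show False using C_Alts C_unranked by simp
  qed
  have G_le_gain: "G \<le> gain t" if "t < k" for t
  proof -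
    have S_t: "S t \<subseteq> S k" unfolding S_def using that by (simp add: prefix_set_mono)
    then obtain a where a: "a \<in> C" "a \<notin> S t"
      using C_unranked unfolding S_def by blast
    have "G \<le> (\<Sum>i\<in>N'. w (card (P i \<inter> S t) + 1))"
      unfolding G_def
    proof (intro sum_mono antimonoD[OF w_antimono])
      fix i assume "i \<in> N'"
      then have "finite (P i \<inter> S k)" using fin N'_sub by auto
      then show "card (P i \<inter> S t) + 1 \<le> card (P i \<inter> S k) + 1"
        using S_t by (meson card_mono Int_mono add_right_mono order_refl)
    qed
    also have "\<dots> = (\<Sum>i\<in>N'. if a \<in> P i then w (card (P i \<inter> S t) + 1) else 0)"
      using C_common a(1) by (intro sum.cong) auto
    also have "\<dots> \<le> (\<Sum>i<n. if a \<in> P i then w (card (P i \<inter> S t) + 1) else 0)"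
      using N'_sub w_nonneg by (intro sum_mono2) auto
    also have "\<dots> = wscore w n P (S t \<union> {a}) - wscore w n P (S t)"
      using wscore_marginal_gain[OF fin a(2)] by simp
    also have "\<dots> \<le> gain t"
      using rav that k_len a C_Alts
      unfolding rav_output_def gain_def S_def prefix_set_def by auto
    finally show ?thesis .
  qed
  have "real k * G = (\<Sum>t<k. G)" by simp
  also have "\<dots> \<le> (\<Sum>t<k. gain t)" using G_le_gain by (intro sum_mono) auto
  also have "\<dots> = wscore w n P (S k)"
    using wscore_prefix_telescope[of k r] k_len unfolding gain_def S_def by simp
  finally show ?thesis unfolding G_def S_def .
qed

lemma geometric_rav_avg_prefix_ge:
  assumes p: "1 < p" and rav: "rav_output (geometric_weights p) n Alts P r"
    and Alts: "finite Alts" "is_profile n Alts P"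
    and N'_sub: "N' \<subseteq> {..<n}" and N'_ne: "N' \<noteq> {}"
    and cohesive: "l \<le> cohesiveness P N'"
    and long: "real n / (p - 1) \<le> real k * real (card N') * geometric_weights p (l + 1)"
  shows "real l \<le> avg P N' (prefix_set r k)"
proof (rule ccontr)
  define w where "w = geometric_weights p"
  define S where "S = prefix_set r k"
  define C where "C = (\<Inter>i\<in>N'. P i)"
  assume "\<not> ?thesis"
  then have avg_less: "avg P N' S < real l" unfolding S_def by simp
  have N'_fin: "finite N'" and n_pos: "n \<ge> 1"
    using N'_sub N'_ne finite_subset by fastforce+
  have P_Alts: "\<forall>i<n. P i \<subseteq> Alts"
    using Alts(2) unfolding is_profile_def by blast
  then have P_fin: "\<forall>i<n. finite (P i)"
    using Alts(1) finite_subset by blast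
  have C_Alts: "C \<subseteq> Alts"
    using P_Alts N'_sub N'_ne unfolding C_def by blast
  have "\<not> C \<subseteq> S"
  proof
    assume "C \<subseteq> S"
    then have "real (cohesiveness P N') \<le> avg P N' S"
      using N'_sub P_fin unfolding C_def by (intro avg_ge_cohesiveness N'_fin N'_ne) auto
    then show False using avg_less cohesive by linarith
  qed
  then have "real k * (\<Sum>i\<in>N'. w (card (P i \<inter> S) + 1)) \<le> wscore w n P S"
    using rav p P_fin N'_sub C_Alts unfolding S_def w_def
    by (intro rav_output_prefix_score_ge geometric_weights_nonneg antimono_geometric_weights)
      (auto simp: C_def)
  moreover have "(\<Sum>i\<in>N'. real (card (P i \<inter> S))) < real (card N') * real l"
    using avg_less N'_ne N'_fin by (simp add: avg_def divide_less_eq card_gt_0_iff mult.commute)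
  then have "real (card N') * (1 / p) ^ (l + 1) \<le> (\<Sum>i\<in>N'. (1 / p) ^ (card (P i \<inter> S) + 1))"
    using p by (intro card_mult_power_le_sum_power N'_fin) (auto simp: sum.distrib algebra_simps)
  then have "real (card N') * w (l + 1) \<le> (\<Sum>i\<in>N'. w (card (P i \<inter> S) + 1))"
    by (simp add: w_def geometric_weights_def power_one_over)
  moreover have "wscore w n P S < real n / (p - 1)"
    unfolding w_def using p n_pos by (rule wscore_geometric_less)
  ultimately show False
    using long mult_left_mono[of _ _ "real k"] unfolding w_def by fastforce
qed

lemma geometric_prefix_length_suffices:
  assumes "l \<ge> 1" "0 < \<alpha>" "\<alpha> * real n \<le> real s"
  shows "real n / ((real l + 1) / real l - 1)
    \<le> real (nat \<lceil>exp 1 * (real l + 1) / \<alpha>\<rceil>) * real s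
       * geometric_weights ((real l + 1) / real l) (l + 1)"
proof -
  define w where "w = geometric_weights ((real l + 1) / real l) (l + 1)"
  have w_nonneg: "0 \<le> w"
    by (simp add: w_def geometric_weights_def)
  have ceiling_ge: "exp 1 * (real l + 1) / \<alpha> \<le> real (nat \<lceil>exp 1 * (real l + 1) / \<alpha>\<rceil>)"
    by linarith
  have "real n / ((real l + 1) / real l - 1) = real n * real l"
    using assms(1) by (simp add: field_simps)
  also have "\<dots> \<le> real n * (exp 1 * (real l + 1) * w)"
    using geometric_weights_threshold[OF assms(1)] unfolding w_def by (intro mult_left_mono) auto
  also have "\<dots> = exp 1 * (real l + 1) / \<alpha> * (\<alpha> * real n) * w"
    using assms(2) by simp
  also have "\<dots> \<le> real (nat \<lceil>exp 1 * (real l + 1) / \<alpha>\<rceil>) * real s * w"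
    using assms(2) by (intro mult_right_mono mult_mono ceiling_ge assms(3) w_nonneg of_nat_0_le_iff) auto
  finally show ?thesis unfolding w_def .
qed

theorem corollary1:
  fixes l n :: nat and Alts :: "'a set" and P :: "nat \<Rightarrow> 'a set"
    and r :: "'a list" and N' :: "nat set" and \<alpha> :: real
  assumes "l \<ge> 1"
    and "n \<ge> 1"
    and "finite Alts"
    and "is_profile n Alts P"
    and "\<alpha> \<in> \<rat>" and "0 < \<alpha>" and "\<alpha> \<le> 1"
    and "rav_output (geometric_weights ((real l + 1) / real l)) n Alts P r"
    and "significant n P \<alpha> l N'"
  shows "avg P N' (prefix_set r (nat \<lceil>exp 1 * (real l + 1) / \<alpha>\<rceil>)) \<ge> real l"
proof -
  have N'_sub: "N' \<subseteq> {..<n}" and cohesive: "l \<le> cohesiveness P N'"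
    and card_N': "card N' = nat \<lceil>\<alpha> * real n\<rceil>"
    using assms(9) unfolding significant_def by auto
  have card_N'_ge: "\<alpha> * real n \<le> real (card N')"
    unfolding card_N' by linarith
  moreover have "0 < \<alpha> * real n"
    using assms(2,6) by simp
  ultimately have N'_ne: "N' \<noteq> {}" by auto
  have p_gt_1: "1 < (real l + 1) / real l"
    using assms(1) by simp
  show ?thesis
    using geometric_rav_avg_prefix_ge[OF p_gt_1 assms(8,3,4) N'_sub N'_ne cohesive
        geometric_prefix_length_suffices[OF assms(1,6) card_N'_ge]]
    by simp
qed

end
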